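(* For BQAP1 and for BQAP2 (with $m,n\ge2$), the objective function value of a solution that is locally optimal with respect to the swap neighborhood and the concurrent swap neighborhood can be arbitrarily bad and can be worse than the average $\mathcal{A}_1(Q,c,d)$ (resp. $\mathcal{A}_2(Q,c,d)$): for every $K>0$ there is an instance and a feasible solution that is locally optimal for both neighborhoods whose objective value exceeds the optimal value by more than $K$ and is strictly greater than the average of the objective value over all feasible solutions.
   Context: $M=\{1,\dots,m\}$, $N=\{1,\dots,n\}$. BQAP1 (minimization): data $Q=(q_{ijk\ell})$ ($m\times n\times m\times n$ real array), real $m\times n$ matrices $c,d$; feasible solutions are pairs $(x,y)$ of $m\times n$ 0-1 matrices with $\sum_{j} x_{ij}=1$ for all $i\in M$ and $\sum_{i} y_{ij}=1$ for all $j\in N$; objective $f_1(x,y)=\sum_{i,k\in M}\sum_{j,\ell\in N} q_{ijk\ell}x_{ij}y_{k\ell}+\sum c_{ij}x_{ij}+\sum d_{ij}y_{ij}$. BQAP2 (minimization): data $Q$ ($m\times m\times n\times n$), $m\times m$ matrix $c$, $n\times n$ matrix $d$; feasible $(x,y)$: $x$ is $m\times m$ 0-1 with unit row sums, $y$ is $n\times n$ 0-1 with unit column sums; objective $f_2(x,y)=\sum_{i,j\in M}\sum_{k,\ell\in N} q_{ijk\ell}x_{ij}y_{k\ell}+\sum c_{ij}x_{ij}+\sum d_{ij}y_{ij}$. $\mathcal{A}_1,\mathcal{A}_2$ are the averages of the objective over all feasible solutions. For a feasible $(x,y)$, $swapx(i,j)$ produces $(x',y)$ where $x'$ agrees with $x$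 except that row $i$ is replaced by the unit vector with its 1 in column $j$; $swapy(i,j)$ produces $(x,y')$ where $y'$ agrees with $y$ except column $j$ is replaced by the unit vector with its 1 in row $i$. The swap neighborhood of $(x,y)$ consists of all solutions obtained by one $swapx(i,j)$ or one $swapy(i,j)$. The concurrent swap neighborhood consists of all solutions $(x',y)$ with $x'$ any feasible $x$-matrix (obtained by applying swaps on $x$ in distinct rows) and all solutions $(x,y')$ with $y'$ any feasible $y$-matrix. A solution is locally optimal for a neighborhood if no solution in its neighborhood has strictly smaller objective value. *)

theory Defs
  imports Complex_Main
begin

text \<open>Matrices are functions nat => nat => real, indices 0-based; an r x c 0-1
matrix is zero outside the index range {0..<r} x {0..<c}.\<close>

definition zo_mat :: "nat \<Rightarrow> nat \<Rightarrow> (nat \<Rightarrow> nat \<Rightarrow> real) \<Rightarrow> bool" where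
  "zo_mat r c x \<longleftrightarrow> (\<forall>i j. x i j \<in> {0, 1}) \<and> (\<forall>i j. (r \<le> i \<or> c \<le> j) \<longrightarrow> x i j = 0)"

definition row_assign :: "nat \<Rightarrow> nat \<Rightarrow> (nat \<Rightarrow> nat \<Rightarrow> real) \<Rightarrow> bool" where
  "row_assign r c x \<longleftrightarrow> zo_mat r c x \<and> (\<forall>i<r. (\<Sum>j<c. x i j) = 1)"

definition col_assign :: "nat \<Rightarrow> nat \<Rightarrow> (nat \<Rightarrow> nat \<Rightarrow> real) \<Rightarrow> bool" where
  "col_assign r c y \<longleftrightarrow> zo_mat r c y \<and> (\<forall>j<c. (\<Sum>i<r. y i j) = 1)"

text \<open>Feasible solutions: x is an rx x cx row-assignment, y an ry x cy column-assignment.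
BQAP1: rx=m, cx=n, ry=m, cy=n. BQAP2: rx=cx=m, ry=cy=n.\<close>
definition sols :: "nat \<Rightarrow> nat \<Rightarrow> nat \<Rightarrow> nat \<Rightarrow>
    ((nat \<Rightarrow> nat \<Rightarrow> real) \<times> (nat \<Rightarrow> nat \<Rightarrow> real)) set" where
  "sols rx cx ry cy = {(x, y). row_assign rx cx x \<and> col_assign ry cy y}"

definition swapx :: "(nat \<Rightarrow> nat \<Rightarrow> real) \<Rightarrow> nat \<Rightarrow> nat \<Rightarrow> (nat \<Rightarrow> nat \<Rightarrow> real)" where
  "swapx x i j = x(i := (\<lambda>l. if l = j then 1 else 0))"

definition swapy :: "(nat \<Rightarrow> nat \<Rightarrow> real) \<Rightarrow> nat \<Rightarrow> nat \<Rightarrow> (nat \<Rightarrow> nat \<Rightarrow> real)" where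
  "swapy y i j = (\<lambda>k l. if l = j then (if k = i then 1 else 0) else y k l)"

definition swap_nbhd :: "nat \<Rightarrow> nat \<Rightarrow> nat \<Rightarrow> nat \<Rightarrow>
    (nat \<Rightarrow> nat \<Rightarrow> real) \<Rightarrow> (nat \<Rightarrow> nat \<Rightarrow> real) \<Rightarrow>
    ((nat \<Rightarrow> nat \<Rightarrow> real) \<times> (nat \<Rightarrow> nat \<Rightarrow> real)) set" where
  "swap_nbhd rx cx ry cy x y =
     {(swapx x i j, y) | i j. i < rx \<and> j < cx} \<union> {(x, swapy y i j) | i j. i < ry \<and> j < cy}"

definition conc_nbhd :: "nat \<Rightarrow> nat \<Rightarrow> nat \<Rightarrow> nat \<Rightarrow>
    (nat \<Rightarrow> nat \<Rightarrow> real) \<Rightarrow> (nat \<Rightarrow> nat \<Rightarrow> real) \<Rightarrow>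
    ((nat \<Rightarrow> nat \<Rightarrow> real) \<times> (nat \<Rightarrow> nat \<Rightarrow> real)) set" where
  "conc_nbhd rx cx ry cy x y =
     {(x', y) | x'. row_assign rx cx x'} \<union> {(x, y') | y'. col_assign ry cy y'}"

definition f1 :: "nat \<Rightarrow> nat \<Rightarrow> (nat \<Rightarrow> nat \<Rightarrow> nat \<Rightarrow> nat \<Rightarrow> real) \<Rightarrow>
    (nat \<Rightarrow> nat \<Rightarrow> real) \<Rightarrow> (nat \<Rightarrow> nat \<Rightarrow> real) \<Rightarrow>
    (nat \<Rightarrow> nat \<Rightarrow> real) \<times> (nat \<Rightarrow> nat \<Rightarrow> real) \<Rightarrow> real" where
  "f1 m n Q c d xy = (case xy of (x, y) \<Rightarrow>
     (\<Sum>i<m. \<Sum>k<m. \<Sum>j<n. \<Sum>l<n. Q i j k l * x i j * y k l)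
     + (\<Sum>i<m. \<Sum>j<n. c i j * x i j) + (\<Sum>i<m. \<Sum>j<n. d i j * y i j))"

definition f2 :: "nat \<Rightarrow> nat \<Rightarrow> (nat \<Rightarrow> nat \<Rightarrow> nat \<Rightarrow> nat \<Rightarrow> real) \<Rightarrow>
    (nat \<Rightarrow> nat \<Rightarrow> real) \<Rightarrow> (nat \<Rightarrow> nat \<Rightarrow> real) \<Rightarrow>
    (nat \<Rightarrow> nat \<Rightarrow> real) \<times> (nat \<Rightarrow> nat \<Rightarrow> real) \<Rightarrow> real" where
  "f2 m n Q c d xy = (case xy of (x, y) \<Rightarrow>
     (\<Sum>i<m. \<Sum>j<m. \<Sum>k<n. \<Sum>l<n. Q i j k l * x i j * y k l)
     + (\<Sum>i<m. \<Sum>j<m. c i j * x i j) + (\<Sum>i<n. \<Sum>j<n. d i j * y i j))"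

definition local_opt :: "('s \<Rightarrow> real) \<Rightarrow> 's set \<Rightarrow> 's \<Rightarrow> bool" where
  "local_opt f N s \<longleftrightarrow> (\<forall>s'\<in>N. \<not> f s' < f s)"

definition opt_val :: "('s \<Rightarrow> real) \<Rightarrow> 's set \<Rightarrow> real" where
  "opt_val f S = Min (f ` S)"

definition avg_val :: "('s \<Rightarrow> real) \<Rightarrow> 's set \<Rightarrow> real" where
  "avg_val f S = (\<Sum>s\<in>S. f s) / real (card S)"

end

theory Submission
  imports Defs
begin

text \<open>Take \<open>Q\<close> with the single entry \<open>q\<^sub>0\<^sub>0\<^sub>0\<^sub>0 = -2K\<close> and \<open>c = d\<close> with the single entry
\<open>2K\<close> at \<open>(0,0)\<close>. The objective is then \<open>2K (1 - (1 - x\<^sub>0\<^sub>0)(1 - y\<^sub>0\<^sub>0))\<close>, for both BQAP1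
and BQAP2. It equals \<open>2K\<close>, its maximum, as soon as \<open>x\<^sub>0\<^sub>0 = 1\<close> or \<open>y\<^sub>0\<^sub>0 = 1\<close>. Every solution
in either neighbourhood of a solution with \<open>x\<^sub>0\<^sub>0 = y\<^sub>0\<^sub>0 = 1\<close> keeps one of the two factors,
so such a solution is locally optimal; but when \<open>m, n \<ge> 2\<close> there is a solution with
\<open>x\<^sub>0\<^sub>0 = y\<^sub>0\<^sub>0 = 0\<close> and value \<open>0\<close>, which drags both the optimum and the average below \<open>2K\<close>.\<close>

lemma finite_zo_mat: "finite {x. zo_mat r c x}"
proof -
  let ?support = "\<lambda>x::nat \<Rightarrow> nat \<Rightarrow> real. {(i, j). x i j = 1}"
  have "inj_on ?support {x. zo_mat r c x}"
  proof (rule inj_onI)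
    fix x y
    assume "x \<in> {x. zo_mat r c x}" "y \<in> {x. zo_mat r c x}" and same: "?support x = ?support y"
    then have "x i j \<in> {0, 1}" "y i j \<in> {0, 1}" for i j
      by (auto simp: zo_mat_def)
    moreover have "x i j = 1 \<longleftrightarrow> y i j = 1" for i j
      using same by (auto simp: set_eq_iff)
    ultimately show "x = y"
      by (intro ext) (metis insert_iff singletonD)
  qed
  moreover have "?support ` {x. zo_mat r c x} \<subseteq> Pow ({..<r} \<times> {..<c})"
    by (auto simp: zo_mat_def) (metis not_le zero_neq_one)+
  ultimately show ?thesis
    by (rule inj_on_finite) auto
qed

lemma finite_sols: "finite (sols rx cx ry cy)"
proof -
  have "sols rx cx ry cy \<subseteq> {x. zo_mat rx cx x} \<times> {y. zo_mat ry cy y}"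
    by (auto simp: sols_def row_assign_def col_assign_def)
  then show ?thesis
    using finite_zo_mat by (meson finite_SigmaI finite_subset)
qed

lemma opt_val_le:
  assumes "finite S" "s \<in> S"
  shows "opt_val f S \<le> f s"
  using assms by (simp add: opt_val_def)

lemma avg_val_less_max:
  fixes f :: "'s \<Rightarrow> real"
  assumes "finite S" "s \<in> S" "t \<in> S" "\<forall>u\<in>S. f u \<le> f s" "f t < f s"
  shows "avg_val f S < f s"
proof -
  have "sum f S < (\<Sum>_\<in>S. f s)"
    using assms by (intro sum_strict_mono_ex1) auto
  moreover have "0 < card S"
    using assms card_gt_0_iff by blast
  ultimately show ?thesis
    by (simp add: avg_val_def divide_less_eq mult.commute)
qed

definition unit_col :: "nat \<Rightarrow> nat \<Rightarrow> nat \<Rightarrow> nat \<Rightarrow> real" where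
  "unit_col r j = (\<lambda>i l. if i < r \<and> l = j then 1 else 0)"

definition unit_row :: "nat \<Rightarrow> nat \<Rightarrow> nat \<Rightarrow> nat \<Rightarrow> real" where
  "unit_row c i = (\<lambda>k l. if k = i \<and> l < c then 1 else 0)"

lemma row_assign_unit_col: "j < c \<Longrightarrow> row_assign r c (unit_col r j)"
  by (auto simp: row_assign_def zo_mat_def unit_col_def)

lemma col_assign_unit_row: "i < r \<Longrightarrow> col_assign r c (unit_row c i)"
  by (auto simp: col_assign_def zo_mat_def unit_row_def)

lemma sum_lessThan_at_zero:
  fixes f :: "nat \<Rightarrow> 'a::comm_monoid_add"
  assumes "0 < m" "\<And>i. 0 < i \<Longrightarrow> f i = 0"
  shows "(\<Sum>i<m. f i) = f 0"
  using assms by (subst sum.mono_neutral_right[of "{..<m}" "{0}"]) auto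

definition corner_quad :: "real \<Rightarrow> nat \<Rightarrow> nat \<Rightarrow> nat \<Rightarrow> nat \<Rightarrow> real" where
  "corner_quad K i j k l = (if i = 0 \<and> j = 0 \<and> k = 0 \<and> l = 0 then - 2 * K else 0)"

definition corner_lin :: "real \<Rightarrow> nat \<Rightarrow> nat \<Rightarrow> real" where
  "corner_lin K i j = (if i = 0 \<and> j = 0 then 2 * K else 0)"

definition corner_obj :: "real \<Rightarrow> (nat \<Rightarrow> nat \<Rightarrow> real) \<times> (nat \<Rightarrow> nat \<Rightarrow> real) \<Rightarrow> real" where
  "corner_obj K = (\<lambda>(x, y). 2 * K * (x 0 0 + y 0 0 - x 0 0 * y 0 0))"

lemma f1_corner:
  assumes "0 < m" "0 < n"
  shows "f1 m n (corner_quad K) (corner_lin K) (corner_lin K) = corner_obj K"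
  using assms by (auto simp: fun_eq_iff f1_def corner_obj_def corner_quad_def corner_lin_def
      sum_lessThan_at_zero right_diff_distrib distrib_left)

lemma f2_corner:
  assumes "0 < m" "0 < n"
  shows "f2 m n (corner_quad K) (corner_lin K) (corner_lin K) = corner_obj K"
  using assms by (auto simp: fun_eq_iff f2_def corner_obj_def corner_quad_def corner_lin_def
      sum_lessThan_at_zero right_diff_distrib distrib_left)

lemma corner_obj_max: "x 0 0 = 1 \<or> y 0 0 = 1 \<Longrightarrow> corner_obj K (x, y) = 2 * K"
  by (auto simp: corner_obj_def)

lemma corner_obj_le:
  assumes "(x, y) \<in> sols rx cx ry cy" "0 \<le> K"
  shows "corner_obj K (x, y) \<le> 2 * K"
proof -
  have "x 0 0 \<in> {0, 1}" "y 0 0 \<in> {0, 1}"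
    using assms(1) by (auto simp: sols_def row_assign_def col_assign_def zo_mat_def)
  then show ?thesis
    using assms(2) by (auto simp: corner_obj_def)
qed

definition one_sided_nbhd :: "(nat \<Rightarrow> nat \<Rightarrow> real) \<Rightarrow> (nat \<Rightarrow> nat \<Rightarrow> real) \<Rightarrow>
    ((nat \<Rightarrow> nat \<Rightarrow> real) \<times> (nat \<Rightarrow> nat \<Rightarrow> real)) set" where
  "one_sided_nbhd x y = {(x', y) | x'. True} \<union> {(x, y') | y'. True}"

lemma swap_nbhd_one_sided: "swap_nbhd rx cx ry cy x y \<subseteq> one_sided_nbhd x y"
  by (auto simp: swap_nbhd_def one_sided_nbhd_def)

lemma conc_nbhd_one_sided: "conc_nbhd rx cx ry cy x y \<subseteq> one_sided_nbhd x y"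
  by (auto simp: conc_nbhd_def one_sided_nbhd_def)

lemma local_opt_corner:
  assumes "x 0 0 = 1" "y 0 0 = 1" "N \<subseteq> one_sided_nbhd x y"
  shows "local_opt (corner_obj K) N (x, y)"
  using assms by (auto simp: local_opt_def one_sided_nbhd_def corner_obj_max)

lemma corner_obj_bad_local_optimum:
  assumes "0 < rx" "1 < cx" "1 < ry" "0 < cy" and K_pos: "0 < K"
  shows "\<exists>x y. (x, y) \<in> sols rx cx ry cy
            \<and> local_opt (corner_obj K) (swap_nbhd rx cx ry cy x y) (x, y)
            \<and> local_opt (corner_obj K) (conc_nbhd rx cx ry cy x y) (x, y)
            \<and> corner_obj K (x, y) > opt_val (corner_obj K) (sols rx cx ry cy) + K
            \<and> corner_obj K (x, y) > avg_val (corner_obj K) (sols rx cx ry cy)"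
proof (intro exI conjI)
  let ?S = "sols rx cx ry cy" and ?f = "corner_obj K"
  let ?bx = "unit_col rx 0" and ?by = "unit_row cy 0"
  let ?gx = "unit_col rx 1" and ?gy = "unit_row cy 1"
  show bad: "(?bx, ?by) \<in> ?S"
    using assms by (simp add: sols_def row_assign_unit_col col_assign_unit_row)
  have good: "(?gx, ?gy) \<in> ?S"
    using assms by (simp add: sols_def row_assign_unit_col col_assign_unit_row)
  have corner: "?bx 0 0 = 1" "?by 0 0 = 1"
    using assms by (simp_all add: unit_col_def unit_row_def)
  show "local_opt ?f (swap_nbhd rx cx ry cy ?bx ?by) (?bx, ?by)"
    using corner by (intro local_opt_corner swap_nbhd_one_sided)
  show "local_opt ?f (conc_nbhd rx cx ry cy ?bx ?by) (?bx, ?by)"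
    using corner by (intro local_opt_corner conc_nbhd_one_sided)
  have bad_val: "?f (?bx, ?by) = 2 * K"
    using corner by (simp add: corner_obj_max)
  have good_val: "?f (?gx, ?gy) = 0"
    by (simp add: corner_obj_def unit_col_def unit_row_def)
  have "opt_val ?f ?S \<le> 0"
    using opt_val_le[OF finite_sols good, of ?f] good_val by simp
  then show "?f (?bx, ?by) > opt_val ?f ?S + K"
    using bad_val K_pos by linarith
  show "?f (?bx, ?by) > avg_val ?f ?S"
    using K_pos bad_val good_val corner_obj_le
    by (intro avg_val_less_max[OF finite_sols bad good]) auto
qed

theorem theorem5:
  fixes m n :: nat and K :: real
  assumes "2 \<le> m" and "2 \<le> n" and "0 < K"
  shows "(\<exists>Q c d x y. (x, y) \<in> sols m n m n
            \<and> local_opt (f1 m n Q c d) (swap_nbhd m n m n x y) (x, y)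
            \<and> local_opt (f1 m n Q c d) (conc_nbhd m n m n x y) (x, y)
            \<and> f1 m n Q c d (x, y) > opt_val (f1 m n Q c d) (sols m n m n) + K
            \<and> f1 m n Q c d (x, y) > avg_val (f1 m n Q c d) (sols m n m n))
       \<and> (\<exists>Q c d x y. (x, y) \<in> sols m m n n
            \<and> local_opt (f2 m n Q c d) (swap_nbhd m m n n x y) (x, y)
            \<and> local_opt (f2 m n Q c d) (conc_nbhd m m n n x y) (x, y)
            \<and> f2 m n Q c d (x, y) > opt_val (f2 m n Q c d) (sols m m n n) + K
            \<and> f2 m n Q c d (x, y) > avg_val (f2 m n Q c d) (sols m m n n))"
proof -
  have dims: "0 < m" "1 < m" "0 < n" "1 < n"
    using assms(1,2) by auto
  have f1: "f1 m n (corner_quad K) (corner_lin K) (corner_lin K) = corner_obj K"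
    and f2: "f2 m n (corner_quad K) (corner_lin K) (corner_lin K) = corner_obj K"
    using dims by (simp_all add: f1_corner f2_corner)
  show ?thesis
    using corner_obj_bad_local_optimum[of m n m n K] corner_obj_bad_local_optimum[of m m n n K] dims assms(3)
    by (metis f1 f2)
qed

end
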